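(* Let $h$ be an admissible perturbation and $\alpha\in(0,1)$. There exists $l>0$ (depending only on $h$ and the network) such that for every $\eta>0$ there is $t_0\ge0$ with the following property: for every admissible initial condition, the solution of the dynamics with rate $\eta$ satisfies $$\tilde\nabla_\pi W(\rho(t),\pi(t))'\big(F^h(f(t))-\pi(t)\big)\le\frac{2l}{1-\alpha}\qquad\forall t\ge t_0.$$
   Context: Network: $\mathcal G=(\mathcal V,\mathcal E)$ is a finite directed graph with $\mathcal V=\{0,1,\dots,n\}$, containing no directed cycle, in which node $0$ is the unique node with no incoming link, node $n$ is the unique node with no outgoing link, there is a directed path from every node to $n$, and every link $(u,v)\in\mathcal E$ satisfies $u<v$. For $v\in\mathcal V$, $\mathcal E_v^-$ and $\mathcal E_v^+$ are the sets of links entering and leaving $v$. Each link $e$ has a flow-density function $\mu_e:[0,\infty)\to[0,\infty)$ that is continuously differentiable, strictly increasing, strictly concave, with $\mu_e(0)=0$ and $\mu_e'(0)<\infty$; its capacity is $C_e:=\lim_{\rho\to\infty}\mu_e(\rho)\in(0,+\infty]$. Put $\mathcal F_v:=\prod_{e\in\mathcal E_v^+}[0,C_e)$, $\mathcal F:=\prod_{e\in\mathcal E}[0,C_e)$, and $\mu(\rho):=(\mu_e(\rho_e))_{e\in\mathcal E}$. The delay is $T_e(f_e)=\mu_e^{-1}(f_e)/f_e$ for $0<f_e<C_e$, $T_e(0)=1/\mu_e'(0)$, $T_e(f_e)=+\infty$ for $f_e\ge C_e$; $T(f):=(T_e(f_e))_e$. $\mathcal P$ is the set of directed paths from $0$ to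 $n$, $A\in\{0,1\}^{\mathcal E\times\mathcal P}$ the link-path incidence matrix ($A_{ep}=1$ iff $e\in p$), $\mathcal S(\mathcal P)=\{\pi\in\mathbb R_+^{\mathcal P}:\sum_p\pi_p=1\}$, $\Pi:=\{\pi\in\mathcal S(\mathcal P):(A\pi)_e<C_e\ \forall e\}$, and $f^\pi:=A\pi$. The min-cut capacity $C^*:=\min\{\sum_{(u,v)\in\mathcal E:u\in\mathcal U,v\notin\mathcal U}C_{(u,v)}:\mathcal U\subseteq\mathcal V,0\in\mathcal U,n\notin\mathcal U\}$ is assumed to satisfy $C^*>1$. Perturbation: $\Phi:=I-|\mathcal P|^{-1}\mathbf 1\mathbf 1'$; interiors $\mathrm{int}$ and boundaries $\partial$ of subsets of $\mathcal S(\mathcal P)$ are relative to the hyperplane $\{x:\mathbf 1'x=1\}$. An admissible perturbation is a function $h:\Pi_h\to\mathbb R$, where $\Pi_h\subseteq\Pi$ is closed in $\mathbb R^{\mathcal P}$, convex, with nonempty interior, $h$ is strictly convex, twice differentiable on $\mathrm{int}(\Pi_h)$, and $\|\tilde\nabla h(\pi)\|\to+\infty$ as $\pi\to\partial\Pi_h$, where $\tilde\nabla h:=\Phi\nabla h$. Its perturbed best response is $F^h(f):=\arg\min_{\omega\in\Pi_h}\{\omega'A'T(f)+h(\omega)\}$ for $f\in\mathcal F$. Local decisions: for each $v\in\{0,\dots,n-1\}$ a continuously differentiable $G^v:\mathcal F_v\times\Pi\to\mathcal S(\mathcal E_v^+)$ is given such that (consistency) $(\sum_{j\in\mathcal E_v^+}f^\pi_j)\,G^v_e(f^\pi_{\mathcal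 E_v^+},\pi)=f^\pi_e$ for all $\pi\in\Pi$, $e\in\mathcal E_v^+$; and (cooperativity) $\partial G^v_j(f_{\mathcal E_v^+},\pi)/\partial f_e\ge0$ for all $\pi\in\Pi$, $f_{\mathcal E_v^+}\in\mathcal F_v$, $j\neq e\in\mathcal E_v^+$. For $f\in\mathcal F$, $\pi\in\Pi$, $e\in\mathcal E_v^+$: $H_e(f,\pi):=G^v_e(f_{\mathcal E_v^+},\pi)-f_e$ if $v=0$, and $H_e(f,\pi):=(\sum_{j\in\mathcal E_v^-}f_j)G^v_e(f_{\mathcal E_v^+},\pi)-f_e$ if $1\le v<n$. Dynamics: for $\eta>0$, $\dot\pi=\eta(F^h(f)-\pi)$, $\dot\rho=H(f,\pi)$, $f=\mu(\rho)$. An admissible initial condition is $\pi(0)\in\Pi$ with all entries positive and $\rho(0)\in(0,\infty)^{\mathcal E}$; $(\pi(t),\rho(t))_{t\ge0}$ denotes the (unique, global) solution, $f(t):=\mu(\rho(t))$, $f^\pi(t):=A\pi(t)$. Lyapunov notation: for $\pi\in\Pi$, $\rho^\pi_e:=\mu_e^{-1}(f^\pi_e)$; $\sigma_e:=\mathrm{sgn}(\rho_e-\rho^\pi_e)$ with $\mathrm{sgn}(0)=0$; $W(\rho,\pi):=\sum_{v=0}^{n-1}\alpha^v\sum_{e\in\mathcal E_v^+}|\rho_e-\rho^\pi_e|$. Its gradient in $\pi$ is taken with the convention $\frac{d}{dx}|x|=\mathrm{sgn}(x)$ for all $x$, i.e. $\partial W(\rho,\pi)/\partial\pi_p:=-\sum_{v=0}^{n-1}\alpha^v\sum_{e\in\mathcal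 E_v^+}\sigma_e A_{ep}/\mu_e'(\rho^\pi_e)$, and $\tilde\nabla_\pi W:=\Phi\nabla_\pi W$. *)

theory Defs
  imports "HOL-Analysis.Analysis"
begin

text \<open>Links are the elements of a finite type 'e; link e goes from node src e to node dst e.
  Nodes are 0..n. Paths from 0 to n are indexed by a finite type 'p via a bijection pth.\<close>

definition network :: "('e::finite \<Rightarrow> nat) \<Rightarrow> ('e \<Rightarrow> nat) \<Rightarrow> nat \<Rightarrow> bool" where
  "network src dst n \<longleftrightarrow>
     inj (\<lambda>e. (src e, dst e)) \<and>
     (\<forall>e. src e < dst e \<and> dst e \<le> n) \<and>
     (\<forall>v\<in>{1..n}. \<exists>e. dst e = v) \<and>
     (\<forall>v<n. \<exists>e. src e = v) \<and>
     (\<forall>v\<le>n. (v, n) \<in> {(src e, dst e) | e. True}\<^sup>*)"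

definition is_path :: "('e \<Rightarrow> nat) \<Rightarrow> ('e \<Rightarrow> nat) \<Rightarrow> nat \<Rightarrow> 'e list \<Rightarrow> bool" where
  "is_path src dst n es \<longleftrightarrow> es \<noteq> [] \<and> src (hd es) = 0 \<and> dst (last es) = n \<and>
     (\<forall>i. Suc i < length es \<longrightarrow> dst (es ! i) = src (es ! Suc i))"

definition path_indexing :: "('e \<Rightarrow> nat) \<Rightarrow> ('e \<Rightarrow> nat) \<Rightarrow> nat \<Rightarrow> ('p::finite \<Rightarrow> 'e list) \<Rightarrow> bool" where
  "path_indexing src dst n pth \<longleftrightarrow> bij_betw pth UNIV {es. is_path src dst n es}"

definition Amat :: "('p \<Rightarrow> 'e list) \<Rightarrow> 'e \<Rightarrow> 'p \<Rightarrow> real" where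
  "Amat pth e p = (if e \<in> set (pth p) then 1 else 0)"

definition fpi :: "('p::finite \<Rightarrow> 'e list) \<Rightarrow> real^'p \<Rightarrow> real^'e" where
  "fpi pth \<pi> = (\<chi> e. \<Sum>p\<in>UNIV. Amat pth e p * \<pi> $ p)"

definition strictly_convex_on :: "'a::real_vector set \<Rightarrow> ('a \<Rightarrow> real) \<Rightarrow> bool" where
  "strictly_convex_on S f \<longleftrightarrow> convex S \<and>
     (\<forall>x\<in>S. \<forall>y\<in>S. x \<noteq> y \<longrightarrow> (\<forall>t. 0 < t \<and> t < 1 \<longrightarrow>
        f ((1 - t) *\<^sub>R x + t *\<^sub>R y) < (1 - t) * f x + t * f y))"

definition flow_density :: "('e \<Rightarrow> real \<Rightarrow> real) \<Rightarrow> ('e \<Rightarrow> real \<Rightarrow> real) \<Rightarrow> bool" where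
  "flow_density mu dmu \<longleftrightarrow> (\<forall>e.
     (\<forall>r\<ge>0. (mu e has_real_derivative dmu e r) (at r within {0..})) \<and>
     continuous_on {0..} (dmu e) \<and>
     strict_mono_on {0..} (mu e) \<and>
     strictly_convex_on {0..} (\<lambda>r. - mu e r) \<and>
     mu e 0 = 0)"

definition capacity :: "('e \<Rightarrow> real \<Rightarrow> real) \<Rightarrow> 'e \<Rightarrow> ereal" where
  "capacity mu e = Lim at_top (\<lambda>r. ereal (mu e r))"

definition mu_inv :: "('e \<Rightarrow> real \<Rightarrow> real) \<Rightarrow> 'e \<Rightarrow> real \<Rightarrow> real" where
  "mu_inv mu e y = (THE r. 0 \<le> r \<and> mu e r = y)"

definition mu_vec :: "('e \<Rightarrow> real \<Rightarrow> real) \<Rightarrow> real^'e \<Rightarrow> real^'e" where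
  "mu_vec mu \<rho> = (\<chi> e. mu e (\<rho> $ e))"

text \<open>Delay, for 0 \<le> x < C_e (the only arguments at which it is used).\<close>
definition delay :: "('e \<Rightarrow> real \<Rightarrow> real) \<Rightarrow> ('e \<Rightarrow> real \<Rightarrow> real) \<Rightarrow> 'e \<Rightarrow> real \<Rightarrow> real" where
  "delay mu dmu e x = (if x = 0 then 1 / dmu e 0 else mu_inv mu e x / x)"

definition Fset :: "('e::finite \<Rightarrow> real \<Rightarrow> real) \<Rightarrow> (real^'e) set" where
  "Fset mu = {f. \<forall>e. 0 \<le> f $ e \<and> ereal (f $ e) < capacity mu e}"

text \<open>F_v, embedded in R^E: only the coordinates of links leaving v are constrained.\<close>
definition Fv :: "('e::finite \<Rightarrow> real \<Rightarrow> real) \<Rightarrow> ('e \<Rightarrow> nat) \<Rightarrow> nat \<Rightarrow> (real^'e) set" where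
  "Fv mu src v = {f. \<forall>e. src e = v \<longrightarrow> 0 \<le> f $ e \<and> ereal (f $ e) < capacity mu e}"

definition simplexP :: "(real^'p::finite) set" where
  "simplexP = {\<pi>. (\<forall>p. 0 \<le> \<pi> $ p) \<and> (\<Sum>p\<in>UNIV. \<pi> $ p) = 1}"

definition PiSet :: "('e::finite \<Rightarrow> real \<Rightarrow> real) \<Rightarrow> ('p::finite \<Rightarrow> 'e list) \<Rightarrow> (real^'p) set" where
  "PiSet mu pth = {\<pi> \<in> simplexP. \<forall>e. ereal (fpi pth \<pi> $ e) < capacity mu e}"

definition hyperP :: "(real^'p::finite) set" where
  "hyperP = {x. (\<Sum>p\<in>UNIV. x $ p) = 1}"

definition int_H :: "(real^'p::finite) set \<Rightarrow> (real^'p) set" where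
  "int_H S = {x \<in> S. \<exists>\<epsilon>>0. \<forall>y\<in>hyperP. dist y x < \<epsilon> \<longrightarrow> y \<in> S}"

definition bdry_H :: "(real^'p::finite) set \<Rightarrow> (real^'p) set" where
  "bdry_H S = closure S - int_H S"

definition Phi :: "real^'p::finite \<Rightarrow> real^'p" where
  "Phi x = x - (\<chi> i. (\<Sum>j\<in>UNIV. x $ j) / real CARD('p))"

definition admissible_perturbation ::
  "('e::finite \<Rightarrow> real \<Rightarrow> real) \<Rightarrow> ('p::finite \<Rightarrow> 'e list) \<Rightarrow> (real^'p) set \<Rightarrow> (real^'p \<Rightarrow> real) \<Rightarrow> bool" where
  "admissible_perturbation mu pth Pih h \<longleftrightarrow>
     Pih \<subseteq> PiSet mu pth \<and> closed Pih \<and> convex Pih \<and> int_H Pih \<noteq> {} \<and>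
     strictly_convex_on Pih h \<and>
     (\<exists>gh Hh. (\<forall>x\<in>int_H Pih.
          (h has_derivative (\<lambda>d. gh x \<bullet> d)) (at x within Pih) \<and>
          (gh has_derivative Hh x) (at x within Pih)) \<and>
        (\<forall>b\<in>bdry_H Pih. filterlim (\<lambda>x. norm (Phi (gh x))) at_top (at b within int_H Pih)))"

definition best_response ::
  "('e::finite \<Rightarrow> real \<Rightarrow> real) \<Rightarrow> ('e \<Rightarrow> real \<Rightarrow> real) \<Rightarrow> ('p::finite \<Rightarrow> 'e list) \<Rightarrow>
   (real^'p) set \<Rightarrow> (real^'p \<Rightarrow> real) \<Rightarrow> real^'e \<Rightarrow> real^'p" where
  "best_response mu dmu pth Pih h f =
     (let obj = (\<lambda>\<omega>. (\<Sum>p\<in>UNIV. \<omega> $ p * (\<Sum>e\<in>UNIV. Amat pth e p * delay mu dmu e (f $ e))) + h \<omega>)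
      in (THE \<omega>. \<omega> \<in> Pih \<and> (\<forall>\<omega>'\<in>Pih. obj \<omega> \<le> obj \<omega>')))"

text \<open>G v f pi is an element of R^E supported on the links leaving v (i.e. an element of
  S(E_v^+) embedded by zeros); it depends only on the coordinates of f on links leaving v.\<close>
definition local_decisions ::
  "('e::finite \<Rightarrow> real \<Rightarrow> real) \<Rightarrow> ('p::finite \<Rightarrow> 'e list) \<Rightarrow> ('e \<Rightarrow> nat) \<Rightarrow> nat \<Rightarrow>
   (nat \<Rightarrow> real^'e \<Rightarrow> real^'p \<Rightarrow> real^'e) \<Rightarrow> bool" where
  "local_decisions mu pth src n G \<longleftrightarrow> (\<forall>v<n.
     (\<forall>f \<pi>. (\<forall>e. 0 \<le> G v f \<pi> $ e) \<and> (\<forall>e. src e \<noteq> v \<longrightarrow> G v f \<pi> $ e = 0) \<and>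
            (\<Sum>e\<in>{e. src e = v}. G v f \<pi> $ e) = 1) \<and>
     (\<forall>f f' \<pi>. (\<forall>e. src e = v \<longrightarrow> f $ e = f' $ e) \<longrightarrow> G v f \<pi> = G v f' \<pi>) \<and>
     (\<exists>G' :: (real^'e) \<times> (real^'p) \<Rightarrow> ((real^'e) \<times> (real^'p)) \<Rightarrow>\<^sub>L (real^'e).
        (\<forall>x\<in>Fv mu src v \<times> PiSet mu pth.
           ((\<lambda>y. G v (fst y) (snd y)) has_derivative blinfun_apply (G' x)) (at x within Fv mu src v \<times> PiSet mu pth)) \<and>
        continuous_on (Fv mu src v \<times> PiSet mu pth) G' \<and>
        (\<forall>\<pi>\<in>PiSet mu pth. \<forall>f\<in>Fv mu src v. \<forall>j e. src j = v \<longrightarrow> src e = v \<longrightarrow> j \<noteq> e \<longrightarrow>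
           0 \<le> blinfun_apply (G' (f, \<pi>)) (axis e 1, 0) $ j)) \<and>
     (\<forall>\<pi>\<in>PiSet mu pth. \<forall>e. src e = v \<longrightarrow>
        (\<Sum>j\<in>{j. src j = v}. fpi pth \<pi> $ j) * G v (fpi pth \<pi>) \<pi> $ e = fpi pth \<pi> $ e))"

definition Hfun ::
  "('e::finite \<Rightarrow> nat) \<Rightarrow> ('e \<Rightarrow> nat) \<Rightarrow> (nat \<Rightarrow> real^'e \<Rightarrow> real^'p \<Rightarrow> real^'e) \<Rightarrow> real^'e \<Rightarrow> real^'p \<Rightarrow> real^'e" where
  "Hfun src dst G f \<pi> = (\<chi> e.
     (if src e = 0 then G (src e) f \<pi> $ e
      else (\<Sum>j\<in>{j. dst j = src e}. f $ j) * G (src e) f \<pi> $ e) - f $ e)"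

definition is_solution ::
  "('e::finite \<Rightarrow> real \<Rightarrow> real) \<Rightarrow> ('e \<Rightarrow> real \<Rightarrow> real) \<Rightarrow> ('p::finite \<Rightarrow> 'e list) \<Rightarrow>
   ('e \<Rightarrow> nat) \<Rightarrow> ('e \<Rightarrow> nat) \<Rightarrow> (nat \<Rightarrow> real^'e \<Rightarrow> real^'p \<Rightarrow> real^'e) \<Rightarrow>
   (real^'p) set \<Rightarrow> (real^'p \<Rightarrow> real) \<Rightarrow> real \<Rightarrow> (real \<Rightarrow> real^'p) \<Rightarrow> (real \<Rightarrow> real^'e) \<Rightarrow> bool" where
  "is_solution mu dmu pth src dst G Pih h \<eta> \<pi> \<rho> \<longleftrightarrow> (\<forall>t\<ge>0.
     \<pi> t \<in> PiSet mu pth \<and> (\<forall>e. 0 \<le> \<rho> t $ e) \<and> mu_vec mu (\<rho> t) \<in> Fset mu \<and>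
     (\<pi> has_vector_derivative
        \<eta> *\<^sub>R (best_response mu dmu pth Pih h (mu_vec mu (\<rho> t)) - \<pi> t)) (at t within {0..}) \<and>
     (\<rho> has_vector_derivative Hfun src dst G (mu_vec mu (\<rho> t)) (\<pi> t)) (at t within {0..}))"

definition admissible_init :: "('e::finite \<Rightarrow> real \<Rightarrow> real) \<Rightarrow> ('p::finite \<Rightarrow> 'e list) \<Rightarrow> real^'p \<Rightarrow> real^'e \<Rightarrow> bool" where
  "admissible_init mu pth \<pi>0 \<rho>0 \<longleftrightarrow> \<pi>0 \<in> PiSet mu pth \<and> (\<forall>p. 0 < \<pi>0 $ p) \<and> (\<forall>e. 0 < \<rho>0 $ e)"

definition rho_pi :: "('e::finite \<Rightarrow> real \<Rightarrow> real) \<Rightarrow> ('p::finite \<Rightarrow> 'e list) \<Rightarrow> real^'p \<Rightarrow> 'e \<Rightarrow> real" where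
  "rho_pi mu pth \<pi> e = mu_inv mu e (fpi pth \<pi> $ e)"

definition gradW ::
  "('e::finite \<Rightarrow> real \<Rightarrow> real) \<Rightarrow> ('e \<Rightarrow> real \<Rightarrow> real) \<Rightarrow> ('p::finite \<Rightarrow> 'e list) \<Rightarrow> ('e \<Rightarrow> nat) \<Rightarrow> nat \<Rightarrow>
   real \<Rightarrow> real^'e \<Rightarrow> real^'p \<Rightarrow> real^'p" where
  "gradW mu dmu pth src n \<alpha> \<rho> \<pi> = (\<chi> p.
     - (\<Sum>v<n. \<alpha> ^ v * (\<Sum>e\<in>{e. src e = v}.
          sgn (\<rho> $ e - rho_pi mu pth \<pi> e) * Amat pth e p / dmu e (rho_pi mu pth \<pi> e))))"

definition min_cut_gt_one :: "('e::finite \<Rightarrow> real \<Rightarrow> real) \<Rightarrow> ('e \<Rightarrow> nat) \<Rightarrow> ('e \<Rightarrow> nat) \<Rightarrow> nat \<Rightarrow> bool" where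
  "min_cut_gt_one mu src dst n \<longleftrightarrow> (\<forall>U \<subseteq> {0..n}. 0 \<in> U \<longrightarrow> n \<notin> U \<longrightarrow>
     (\<Sum>e\<in>{e. src e \<in> U \<and> dst e \<notin> U}. capacity mu e) > 1)"

end

theory Submission
  imports Defs
begin

text \<open>
  After a transient of length \<open>ln 2 / \<eta>\<close> the link flows are bounded away from capacity,
  uniformly in the initial condition. Indeed \<open>\<pi>\<close> relaxes exponentially towards the best
  response, which lies in the compact set \<open>\<Pi>\<^sub>h\<close> whose link flows stay strictly below capacity;
  after time \<open>ln 2 / \<eta>\<close> each link flow is at most the midpoint between its initial value and its
  maximum over \<open>\<Pi>\<^sub>h\<close>. So the densities \<open>\<rho>\<^sup>\<pi>\<close> stay in a compact interval on which
  \<open>\<mu>\<^sub>e'\<close> is bounded below, which bounds every entry of \<open>\<nabla>\<^sub>\<pi>W\<close>; pairing with the difference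
  of two points of the simplex at most doubles that bound.

  That the best response is a point of \<open>\<Pi>\<^sub>h\<close> at all rests on the barrier property of \<open>h\<close>:
  a limit of a minimising sequence cannot lie on the relative boundary, since along the segment
  to an interior point the projected gradient would blow up, while convexity keeps it bounded by
  the oscillation of the cost on a ball around that point divided by the radius.
\<close>

lemma strictly_convex_on_imp_convex_on:
  assumes "strictly_convex_on S f"
  shows "convex_on S f"
proof (rule convex_onI)
  show "convex S" using assms unfolding strictly_convex_on_def by blast
  fix t :: real and x y assume t: "0 < t" "t < 1" and xy: "x \<in> S" "y \<in> S"
  show "f ((1 - t) *\<^sub>R x + t *\<^sub>R y) \<le> (1 - t) * f x + t * f y"
  proof (cases "x = y")
    case True
    then show ?thesis by (simp flip: scaleR_add_left) (simp add: algebra_simps)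
  next
    case False
    then show ?thesis using assms t xy unfolding strictly_convex_on_def by (meson less_imp_le)
  qed
qed

lemma convex_on_tangent_le:
  fixes F :: "'a::real_normed_vector \<Rightarrow> real"
  assumes conv: "convex_on S F" and u: "u \<in> S" and x: "x \<in> S"
    and der: "(F has_derivative F') (at u within S)"
  shows "F u + F' (x - u) \<le> F x"
proof -
  define l where "l = (\<lambda>t::real. u + t *\<^sub>R (x - u))"
  have l_comb: "l t = (1 - t) *\<^sub>R u + t *\<^sub>R x" for t
    by (simp add: l_def algebra_simps)
  have l_mem: "l ` {0..1} \<subseteq> S"
    using conv u x unfolding convex_on_def convex_alt by (auto simp: l_comb)
  have "(l has_derivative (\<lambda>t. t *\<^sub>R (x - u))) (at 0 within {0..1})"
    unfolding l_def by (auto intro!: derivative_eq_intros)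
  moreover have "l 0 = u" by (simp add: l_def)
  ultimately have "((F \<circ> l) has_derivative (F' \<circ> (\<lambda>t. t *\<^sub>R (x - u)))) (at 0 within {0..1})"
    using diff_chain_within der l_mem by (metis has_derivative_subset)
  moreover have "F' \<circ> (\<lambda>t. t *\<^sub>R (x - u)) = (*) (F' (x - u))"
    using has_derivative_linear[OF der] by (auto simp: linear_scale)
  ultimately have "((F \<circ> l) has_field_derivative F' (x - u)) (at 0 within {0..1})"
    by (simp add: has_field_derivative_def)
  then have lim: "((\<lambda>t. ((F \<circ> l) t - (F \<circ> l) 0) / (t - 0)) \<longlongrightarrow> F' (x - u)) (at 0 within {0<..1})"
    unfolding has_field_derivative_iff by (rule tendsto_within_subset) auto
  have "eventually (\<lambda>t. ((F \<circ> l) t - (F \<circ> l) 0) / (t - 0) \<le> F x - F u) (at 0 within {0<..1})"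
    unfolding eventually_at_filter
  proof (rule always_eventually, intro allI impI)
    fix t :: real assume t: "t \<noteq> 0" "t \<in> {0<..1}"
    have "F (l t) \<le> (1 - t) * F u + t * F x"
      using convex_onD[OF conv, of t u x] u x t by (simp add: l_comb)
    then have "F (l t) - F u \<le> t * (F x - F u)" by (simp add: algebra_simps)
    then show "((F \<circ> l) t - (F \<circ> l) 0) / (t - 0) \<le> F x - F u"
      using t \<open>l 0 = u\<close> by (simp add: divide_le_eq mult.commute[of t])
  qed
  from tendsto_upperbound[OF lim this] have "F' (x - u) \<le> F x - F u"
    by (simp add: at_within_eq_bot_iff)
  then show ?thesis by simp
qed

lemma strictly_convex_on_add_inner:
  assumes "strictly_convex_on S f"
  shows "strictly_convex_on S (\<lambda>x. c \<bullet> x + f x)"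
  using assms unfolding strictly_convex_on_def by (auto simp: inner_add_right algebra_simps)

lemma strictly_convex_on_minimizer_unique:
  assumes f: "strictly_convex_on S f" and xy: "x \<in> S" "y \<in> S"
    and min: "\<forall>z\<in>S. f x \<le> f z" "\<forall>z\<in>S. f y \<le> f z"
  shows "x = y"
proof (rule ccontr)
  assume "x \<noteq> y"
  define z where "z = (1 - 1/2) *\<^sub>R x + (1/2::real) *\<^sub>R y"
  have "convex S" using f by (simp add: strictly_convex_on_def)
  then have "z \<in> S" using convexD_alt[OF _ xy, of "1/2"] by (simp add: z_def)
  moreover have "f z < (1 - 1/2) * f x + (1/2) * f y"
  proof -
    have "\<forall>t. 0 < t \<and> t < 1 \<longrightarrow> f ((1 - t) *\<^sub>R x + t *\<^sub>R y) < (1 - t) * f x + t * f y"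
      using f xy \<open>x \<noteq> y\<close> unfolding strictly_convex_on_def by blast
    from this[rule_format, of "1/2"] show ?thesis unfolding z_def by simp
  qed
  ultimately show False using min xy by fastforce
qed

lemma nonpos_if_le_mult_small:
  fixes a K \<epsilon> :: real
  assumes "0 < \<epsilon>" and "\<And>s. 0 < s \<Longrightarrow> s < \<epsilon> \<Longrightarrow> a \<le> s * K"
  shows "a \<le> 0"
proof (rule ccontr)
  assume "\<not> a \<le> 0"
  define s where "s = min (\<epsilon> / 2) (a / (2 * (\<bar>K\<bar> + 1)))"
  have s: "0 < s" "s < \<epsilon>" using \<open>\<not> a \<le> 0\<close> assms(1) by (auto simp: s_def)
  have "s * K \<le> s * (\<bar>K\<bar> + 1)" using s by (simp add: mult_left_mono)
  also have "\<dots> \<le> a / (2 * (\<bar>K\<bar> + 1)) * (\<bar>K\<bar> + 1)"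
    by (rule mult_right_mono) (auto simp: s_def)
  also have "\<dots> = a / 2"
    by (simp add: field_simps add_nonneg_eq_0_iff)
  also have "\<dots> < a" using \<open>\<not> a \<le> 0\<close> by simp
  finally show False using assms(2)[OF s] by linarith
qed

lemma sum_Phi_eq_zero: "(\<Sum>p\<in>UNIV. Phi (x::real^'p::finite) $ p) = 0"
  by (simp add: Phi_def sum_subtractf)

lemma Phi_add: "Phi (x + y) = Phi x + Phi (y::real^'p::finite)"
  unfolding Phi_def by (simp add: vec_eq_iff sum.distrib add_divide_distrib)

lemma inner_Phi_eq_of_sum_zero:
  assumes "(\<Sum>p\<in>UNIV. d $ p) = 0"
  shows "Phi x \<bullet> d = x \<bullet> (d::real^'p::finite)"
proof -
  have "Phi x \<bullet> d = x \<bullet> d - (\<Sum>j\<in>UNIV. x $ j) / real CARD('p) * (\<Sum>p\<in>UNIV. d $ p)"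
    by (simp add: Phi_def inner_vec_def left_diff_distrib sum_subtractf sum_distrib_left)
  with assms show ?thesis by simp
qed

lemma inner_Phi_self: "x \<bullet> Phi x = (norm (Phi (x::real^'p::finite)))\<^sup>2"
  by (simp add: power2_norm_eq_inner inner_Phi_eq_of_sum_zero sum_Phi_eq_zero inner_commute)

lemma norm_Phi_le_if_inner_le:
  fixes x :: "real^'p::finite"
  assumes "0 < r" and le: "\<And>w. (\<Sum>p\<in>UNIV. w $ p) = 0 \<Longrightarrow> norm w \<le> r \<Longrightarrow> x \<bullet> w \<le> c"
  shows "norm (Phi x) \<le> c / r"
proof (cases "Phi x = 0")
  case True
  then show ?thesis using le[of 0] \<open>0 < r\<close> by simp
next
  case False
  define w where "w = (r / norm (Phi x)) *\<^sub>R Phi x"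
  have "(\<Sum>p\<in>UNIV. w $ p) = r / norm (Phi x) * (\<Sum>p\<in>UNIV. Phi x $ p)"
    by (simp add: w_def sum_distrib_left)
  then have "x \<bullet> w \<le> c"
    using False \<open>0 < r\<close> by (intro le) (simp_all add: w_def sum_Phi_eq_zero)
  moreover have "x \<bullet> w = r * norm (Phi x)"
    using False by (simp add: w_def inner_Phi_self power2_eq_square)
  ultimately show ?thesis using \<open>0 < r\<close> by (simp add: pos_le_divide_eq mult.commute)
qed

lemma simplexP_subset_hyperP: "simplexP \<subseteq> hyperP"
  by (auto simp: simplexP_def hyperP_def)

lemma norm_le_one_if_simplexP: "x \<in> simplexP \<Longrightarrow> norm (x::real^'p::finite) \<le> 1"
  using norm_le_l1_cart[of x] by (simp add: simplexP_def)

lemma closed_hyperP: "closed (hyperP :: (real^'p::finite) set)"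
proof -
  have "(hyperP :: (real^'p) set) = {x. (\<chi> i. 1) \<bullet> x = 1}"
    by (simp add: hyperP_def inner_vec_def)
  then show ?thesis using closed_hyperplane by metis
qed

lemma int_H_subset: "int_H S \<subseteq> S"
  by (auto simp: int_H_def)

lemma int_H_convex_combination:
  fixes P :: "(real^'p::finite) set"
  assumes P: "P \<subseteq> hyperP" "convex P" and x: "x \<in> int_H P" and y: "y \<in> P"
    and \<mu>: "0 < \<mu>" "\<mu> \<le> 1"
  shows "(1 - \<mu>) *\<^sub>R y + \<mu> *\<^sub>R x \<in> int_H P"
proof -
  obtain r where r: "r > 0" "\<forall>z\<in>hyperP. dist z x < r \<longrightarrow> z \<in> P"
    using x unfolding int_H_def by blast
  have xP: "x \<in> P" using x int_H_subset by blast
  define u where "u = (1 - \<mu>) *\<^sub>R y + \<mu> *\<^sub>R x"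
  have sum_one: "(\<Sum>p\<in>UNIV. v $ p) = 1" if "v \<in> P" for v
    using that P(1) by (auto simp: hyperP_def)
  have "z \<in> P" if z: "z \<in> hyperP" "dist z u < \<mu> * r" for z
  proof -
    \<comment> \<open>z is the image of a point of the ball around x under the homothety of ratio \<mu> centred at y\<close>
    define w where "w = x + (1 / \<mu>) *\<^sub>R (z - u)"
    have "(\<Sum>p\<in>UNIV. w $ p) = 1"
      using z(1) sum_one[OF xP] sum_one[OF y] \<mu>
      by (simp add: w_def u_def hyperP_def sum.distrib sum_subtractf sum_distrib_left[symmetric]
          sum_divide_distrib[symmetric] algebra_simps)
    moreover have "dist w x < r"
      using z(2) \<mu> by (simp add: w_def dist_norm divide_less_eq mult.commute)
    ultimately have "w \<in> P" using r by (simp add: hyperP_def)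
    moreover have "z = (1 - \<mu>) *\<^sub>R y + \<mu> *\<^sub>R w"
      using \<mu> by (simp add: w_def u_def algebra_simps)
    ultimately show "z \<in> P" using convexD_alt[OF P(2) y, of w \<mu>] \<mu> by simp
  qed
  moreover have "u \<in> P" using convexD_alt[OF P(2) y xP, of \<mu>] \<mu> by (simp add: u_def)
  ultimately show ?thesis using \<mu> r unfolding int_H_def u_def[symmetric]
    by (auto intro!: exI[of _ "\<mu> * r"])
qed

lemma int_H_contains_compact_neighbourhood:
  fixes P :: "(real^'p::finite) set"
  assumes "x \<in> int_H P"
  obtains r where "0 < r" and "compact (cball x r \<inter> hyperP)" and "cball x r \<inter> hyperP \<subseteq> int_H P"
proof -
  obtain r where r: "r > 0" "\<forall>z\<in>hyperP. dist z x < r \<longrightarrow> z \<in> P"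
    using assms unfolding int_H_def by blast
  have "cball x (r / 2) \<inter> hyperP \<subseteq> int_H P"
  proof
    fix z assume z: "z \<in> cball x (r / 2) \<inter> hyperP"
    have "v \<in> P" if "v \<in> hyperP" "dist v z < r / 2" for v
      using r that z dist_triangle[of v x z] by (auto simp: dist_commute)
    moreover have "z \<in> P" using r z by (auto simp: dist_commute)
    ultimately show "z \<in> int_H P" using r unfolding int_H_def by (auto intro!: exI[of _ "r / 2"])
  qed
  moreover have "compact (cball x (r / 2) \<inter> hyperP)"
    using compact_Int_closed[OF compact_cball closed_hyperP] .
  ultimately show thesis using that[of "r / 2"] r by simp
qed

locale barrier_minimization =
  fixes P :: "(real^'p::finite) set" and F :: "real^'p \<Rightarrow> real" and g :: "real^'p \<Rightarrow> real^'p"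
    and x0 :: "real^'p"
  assumes P_simplexP: "P \<subseteq> simplexP" and closed_P: "closed P" and convex_P: "convex P"
    and x0_int: "x0 \<in> int_H P"
    and convex_F: "convex_on P F"
    and F_deriv: "\<And>x. x \<in> int_H P \<Longrightarrow> (F has_derivative (\<lambda>d. g x \<bullet> d)) (at x within P)"
    and barrier: "\<And>b. b \<in> bdry_H P \<Longrightarrow> filterlim (\<lambda>x. norm (Phi (g x))) at_top (at b within int_H P)"
begin

lemma P_hyperP: "P \<subseteq> hyperP"
  using P_simplexP simplexP_subset_hyperP by blast

lemma x0_mem: "x0 \<in> P"
  using x0_int int_H_subset by blast

lemma tangent_le: "u \<in> int_H P \<Longrightarrow> x \<in> P \<Longrightarrow> F u + g u \<bullet> (x - u) \<le> F x"
  using convex_on_tangent_le[OF convex_F _ _ F_deriv] int_H_subset by blast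

lemma continuous_within_int: "u \<in> int_H P \<Longrightarrow> continuous (at u within P) F"
  using has_derivative_continuous[OF F_deriv] .

lemma compact_P: "compact P"
  using P_simplexP norm_le_one_if_simplexP closed_P
  by (auto simp: compact_eq_bounded_closed bounded_iff)

lemma bdd_below_F: "bdd_below (F ` P)"
proof (rule bdd_belowI2)
  fix x assume x: "x \<in> P"
  have "norm x \<le> 1" "norm x0 \<le> 1"
    using norm_le_one_if_simplexP P_simplexP x x0_mem by blast+
  then have "norm (x - x0) \<le> 2" using norm_triangle_ineq4[of x x0] by linarith
  then have "norm (g x0) * norm (x - x0) \<le> norm (g x0) * 2" by (simp add: mult_left_mono)
  moreover have "\<bar>g x0 \<bullet> (x - x0)\<bar> \<le> norm (g x0) * norm (x - x0)"
    by (rule Cauchy_Schwarz_ineq2)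
  ultimately show "F x0 - norm (g x0) * 2 \<le> F x"
    using tangent_le[OF x0_int x] by linarith
qed

abbreviation inf_F :: real where
  "inf_F \<equiv> Inf (F ` P)"

lemma inf_F_le: "x \<in> P \<Longrightarrow> inf_F \<le> F x"
  by (simp add: cInf_lower bdd_below_F)

definition minimizing_limit :: "real^'p \<Rightarrow> bool" where
  "minimizing_limit y \<longleftrightarrow> y \<in> P \<and>
     (\<exists>xs. (\<forall>k. xs k \<in> P) \<and> xs \<longlonglongrightarrow> y \<and> (\<lambda>k. F (xs k)) \<longlonglongrightarrow> inf_F)"

lemma minimizing_limit_exists: "\<exists>y. minimizing_limit y"
proof -
  have "inf_F \<in> closure (F ` P)"
    by (rule closure_contains_Inf) (use x0_mem bdd_below_F in auto)
  then obtain zs where zs: "\<And>k. zs k \<in> F ` P" "zs \<longlonglongrightarrow> inf_F"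
    unfolding closure_sequential by blast
  have "\<forall>k. \<exists>x\<in>P. zs k = F x" using zs(1) by (simp add: image_iff)
  then have "\<exists>xs. \<forall>k. xs k \<in> P \<and> zs k = F (xs k)" unfolding Bex_def by (rule choice)
  then obtain xs where xs: "\<And>k. xs k \<in> P" "\<And>k. zs k = F (xs k)" by blast
  have F_xs: "(\<lambda>k. F (xs k)) \<longlonglongrightarrow> inf_F"
    using zs(2) by (simp add: xs(2)[symmetric])
  obtain y r where y: "y \<in> P" "strict_mono r" "(xs \<circ> r) \<longlonglongrightarrow> y"
    using seq_compactE[OF compact_imp_seq_compact[OF compact_P], of xs] xs(1) by blast
  have "(\<lambda>k. F ((xs \<circ> r) k)) \<longlonglongrightarrow> inf_F"
    using LIMSEQ_subseq_LIMSEQ[OF F_xs y(2)] by (simp add: o_def)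
  moreover have "\<forall>k. (xs \<circ> r) k \<in> P" using xs(1) by simp
  ultimately have "minimizing_limit y"
    unfolding minimizing_limit_def using y(1,3) by blast
  then show ?thesis ..
qed

lemma segment_int: "y \<in> P \<Longrightarrow> 0 < \<mu> \<Longrightarrow> \<mu> \<le> 1 \<Longrightarrow> (1 - \<mu>) *\<^sub>R y + \<mu> *\<^sub>R x0 \<in> int_H P"
  using int_H_convex_combination[OF P_hyperP convex_P x0_int] by blast

lemma segment_le:
  assumes y: "minimizing_limit y" and \<mu>: "0 < \<mu>" "\<mu> \<le> 1"
  shows "F ((1 - \<mu>) *\<^sub>R y + \<mu> *\<^sub>R x0) \<le> (1 - \<mu>) * inf_F + \<mu> * F x0"
proof -
  obtain xs where xs: "\<And>k. xs k \<in> P" "xs \<longlonglongrightarrow> y" "(\<lambda>k. F (xs k)) \<longlonglongrightarrow> inf_F"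
    using y unfolding minimizing_limit_def by blast
  define v where "v k = (1 - \<mu>) *\<^sub>R xs k + \<mu> *\<^sub>R x0" for k
  have vP: "v k \<in> P" for k
    using convexD_alt[OF convex_P xs(1) x0_mem, of \<mu>] \<mu> by (simp add: v_def)
  have vlim: "v \<longlonglongrightarrow> (1 - \<mu>) *\<^sub>R y + \<mu> *\<^sub>R x0"
    unfolding v_def using xs(2) by (auto intro!: tendsto_intros)
  have "(1 - \<mu>) *\<^sub>R y + \<mu> *\<^sub>R x0 \<in> int_H P"
    using y \<mu> segment_int unfolding minimizing_limit_def by simp
  then have "(\<lambda>k. F (v k)) \<longlonglongrightarrow> F ((1 - \<mu>) *\<^sub>R y + \<mu> *\<^sub>R x0)"
    using continuous_within_tendsto_compose[OF continuous_within_int _ vlim] vP by simp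
  moreover have "(\<lambda>k. (1 - \<mu>) * F (xs k) + \<mu> * F x0) \<longlonglongrightarrow> (1 - \<mu>) * inf_F + \<mu> * F x0"
    by (intro tendsto_intros xs(3))
  moreover have "F (v k) \<le> (1 - \<mu>) * F (xs k) + \<mu> * F x0" for k
    unfolding v_def using convex_onD[OF convex_F, of \<mu> "xs k" x0] \<mu> xs(1) x0_mem by simp
  ultimately show ?thesis by (intro LIMSEQ_le) auto
qed

lemma minimizing_limit_int_minimal:
  assumes y: "minimizing_limit y" and "y \<in> int_H P"
  shows "F y = inf_F"
proof -
  obtain xs where xs: "\<And>k. xs k \<in> P" "xs \<longlonglongrightarrow> y" "(\<lambda>k. F (xs k)) \<longlonglongrightarrow> inf_F"
    using y unfolding minimizing_limit_def by blast
  have "(\<lambda>k. F (xs k)) \<longlonglongrightarrow> F y"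
    using continuous_within_tendsto_compose[OF continuous_within_int[OF \<open>y \<in> int_H P\<close>] _ xs(2)] xs(1)
    by simp
  with xs(3) show ?thesis using LIMSEQ_unique by blast
qed

text \<open>Along the segment from \<open>y\<close> to \<open>x0\<close> the cost starts at its infimum, so its slope at any
  interior point of the segment is nonnegative.\<close>

lemma gradient_towards_x0_nonneg:
  assumes y: "minimizing_limit y" and \<theta>: "0 < \<theta>" "\<theta> < 1"
  shows "0 \<le> g ((1 - \<theta>) *\<^sub>R y + \<theta> *\<^sub>R x0) \<bullet> (x0 - y)"
proof -
  define u where "u = (1 - \<theta>) *\<^sub>R y + \<theta> *\<^sub>R x0"
  have yP: "y \<in> P" using y by (simp add: minimizing_limit_def)
  have u: "u \<in> int_H P" using segment_int[OF yP] \<theta> by (simp add: u_def)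
  have "- (\<theta> * (g u \<bullet> (x0 - y))) \<le> 0"
  proof (rule nonpos_if_le_mult_small[OF \<theta>(1)])
    fix s assume s: "0 < s" "s < \<theta>"
    define v where "v = (1 - s) *\<^sub>R y + s *\<^sub>R x0"
    have "v \<in> P" using segment_int[OF yP, of s] s \<theta> int_H_subset by (auto simp: v_def)
    moreover have "v - u = (s - \<theta>) *\<^sub>R (x0 - y)" by (simp add: u_def v_def algebra_simps)
    ultimately have "F u + (s - \<theta>) * (g u \<bullet> (x0 - y)) \<le> F v"
      using tangent_le[OF u] by fastforce
    also have "F v \<le> (1 - s) * inf_F + s * F x0"
      using segment_le[OF y, of s] s \<theta> by (simp add: v_def)
    finally show "- (\<theta> * (g u \<bullet> (x0 - y))) \<le> s * (F x0 - inf_F - g u \<bullet> (x0 - y))"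
      using inf_F_le u int_H_subset by (force simp: algebra_simps)
  qed
  then show ?thesis using \<theta> by (simp add: u_def zero_le_mult_iff)
qed

lemma gradient_bounded_on_segment:
  assumes y: "minimizing_limit y"
  shows "\<exists>K. \<forall>\<theta>. 0 < \<theta> \<and> \<theta> < 1 \<longrightarrow> norm (Phi (g ((1 - \<theta>) *\<^sub>R y + \<theta> *\<^sub>R x0))) \<le> K"
proof -
  obtain r where r: "0 < r" and cK: "compact (cball x0 r \<inter> hyperP)"
    and KI: "cball x0 r \<inter> hyperP \<subseteq> int_H P"
    using int_H_contains_compact_neighbourhood[OF x0_int] by blast
  have "continuous_on (cball x0 r \<inter> hyperP) F"
    unfolding continuous_on_eq_continuous_within
    using KI int_H_subset by (meson continuous_within_int continuous_within_subset subsetD)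
  moreover have "x0 \<in> cball x0 r \<inter> hyperP" using r x0_mem P_hyperP by auto
  ultimately obtain z where "z \<in> cball x0 r \<inter> hyperP" "\<forall>w\<in>cball x0 r \<inter> hyperP. F w \<le> F z"
    using continuous_attains_sup[OF cK] by blast
  then have M: "F w \<le> F z" if "w \<in> cball x0 r \<inter> hyperP" for w using that by blast
  have "norm (Phi (g u)) \<le> (F z - inf_F) / r"
    if \<theta>: "0 < \<theta>" "\<theta> < 1" and u_def: "u = (1 - \<theta>) *\<^sub>R y + \<theta> *\<^sub>R x0" for \<theta> u
  proof (rule norm_Phi_le_if_inner_le[OF r])
    have u: "u \<in> int_H P"
      using segment_int y \<theta> by (simp add: u_def minimizing_limit_def)
    fix w :: "real^'p" assume w: "(\<Sum>p\<in>UNIV. w $ p) = 0" "norm w \<le> r"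
    have "(\<Sum>p\<in>UNIV. (x0 + w) $ p) = 1"
      using w(1) x0_mem P_hyperP by (auto simp: hyperP_def sum.distrib)
    then have xw: "x0 + w \<in> cball x0 r \<inter> hyperP" using w(2) by (simp add: hyperP_def dist_norm)
    have "x0 - u = (1 - \<theta>) *\<^sub>R (x0 - y)" by (simp add: u_def algebra_simps)
    then have "0 \<le> g u \<bullet> (x0 - u)"
      using gradient_towards_x0_nonneg[OF y \<theta>] \<theta> by (simp add: u_def)
    moreover have "F u + g u \<bullet> (x0 + w - u) \<le> F (x0 + w)"
      using tangent_le[OF u] xw KI int_H_subset by blast
    moreover have "inf_F \<le> F u" using inf_F_le u int_H_subset by blast
    ultimately show "g u \<bullet> w \<le> F z - inf_F"
      using M[OF xw] by (simp add: inner_diff_right inner_add_right)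
  qed
  then show ?thesis by blast
qed

lemma minimizing_limit_in_int:
  assumes y: "minimizing_limit y"
  shows "y \<in> int_H P"
proof (rule ccontr)
  assume "y \<notin> int_H P"
  then have y_bdry: "y \<in> bdry_H P"
    using y closed_P by (simp add: minimizing_limit_def bdry_H_def closure_closed)
  define u where "u \<theta> = (1 - \<theta>) *\<^sub>R y + \<theta> *\<^sub>R x0" for \<theta>
  have "y \<noteq> x0" using \<open>y \<notin> int_H P\<close> x0_int by blast
  have ev01: "\<forall>\<^sub>F \<theta> in at_right 0. \<theta> \<in> {0<..<1::real}"
    by (rule eventually_at_right_real) simp
  have "filterlim u (at y within int_H P) (at_right 0)"
    unfolding filterlim_at
  proof
    from ev01 show "\<forall>\<^sub>F \<theta> in at_right 0. u \<theta> \<in> int_H P \<and> u \<theta> \<noteq> y"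
      by eventually_elim
        (use segment_int y \<open>y \<noteq> x0\<close> in \<open>auto simp: u_def minimizing_limit_def algebra_simps\<close>)
    have "(u \<longlongrightarrow> u 0) (at_right 0)" unfolding u_def by (intro tendsto_intros)
    then show "(u \<longlongrightarrow> y) (at_right 0)" by (simp add: u_def)
  qed
  from filterlim_compose[OF barrier[OF y_bdry] this]
  have blowup: "filterlim (\<lambda>\<theta>. norm (Phi (g (u \<theta>)))) at_top (at_right 0)" .
  obtain K where K: "\<forall>\<theta>. 0 < \<theta> \<and> \<theta> < 1 \<longrightarrow> norm (Phi (g (u \<theta>))) \<le> K"
    using gradient_bounded_on_segment[OF y] by (auto simp: u_def)
  have "\<forall>\<^sub>F \<theta> in at_right (0::real). False"
    using eventually_conj[OF blowup[unfolded filterlim_at_top_dense, rule_format, of K] ev01]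
    by (rule eventually_mono) (use K in auto)
  then show False by simp
qed

lemma minimizer_exists: "\<exists>y\<in>P. \<forall>x\<in>P. F y \<le> F x"
proof -
  obtain y where y: "minimizing_limit y" using minimizing_limit_exists by blast
  then have "F y = inf_F" using minimizing_limit_in_int minimizing_limit_int_minimal by blast
  moreover have "y \<in> P" using y by (simp add: minimizing_limit_def)
  ultimately show ?thesis using inf_F_le by (intro bexI[of _ y]) auto
qed

end

lemma PiSet_subset_simplexP: "PiSet mu pth \<subseteq> simplexP"
  by (auto simp: PiSet_def)

lemma subset_simplexP_if_admissible_perturbation:
  "admissible_perturbation mu pth Pih h \<Longrightarrow> Pih \<subseteq> simplexP"
  using PiSet_subset_simplexP unfolding admissible_perturbation_def by blast

lemma compact_if_admissible_perturbation:
  assumes "admissible_perturbation mu pth Pih h"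
  shows "compact Pih"
proof -
  have "closed Pih" using assms unfolding admissible_perturbation_def by blast
  then show ?thesis
    using subset_simplexP_if_admissible_perturbation[OF assms] norm_le_one_if_simplexP
    by (auto simp: compact_eq_bounded_closed bounded_iff)
qed

lemma filterlim_norm_Phi_add_const:
  assumes "filterlim (\<lambda>x. norm (Phi (g x))) at_top F"
  shows "filterlim (\<lambda>x. norm (Phi (c + g x))) at_top F"
proof (rule filterlim_at_top_mono)
  show "filterlim (\<lambda>x. - norm (Phi c) + norm (Phi (g x))) at_top F"
    by (rule filterlim_tendsto_add_at_top[OF tendsto_const assms])
  show "\<forall>\<^sub>F x in F. - norm (Phi c) + norm (Phi (g x)) \<le> norm (Phi (c + g x))"
    using norm_triangle_ineq2[of "Phi (g x)" "- Phi c" for x]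
    by (simp add: Phi_add norm_minus_commute add.commute)
qed

lemma best_response_mem:
  fixes mu :: "'e::finite \<Rightarrow> real \<Rightarrow> real" and pth :: "'p::finite \<Rightarrow> 'e list"
  assumes "admissible_perturbation mu pth Pih h"
  shows "best_response mu dmu pth Pih h f \<in> Pih"
proof -
  define c :: "real^'p" where "c = (\<chi> p. \<Sum>e\<in>UNIV. Amat pth e p * delay mu dmu e (f $ e))"
  define obj where "obj \<omega> = c \<bullet> \<omega> + h \<omega>" for \<omega>
  from assms have closed: "closed Pih" and convex: "convex Pih"
    and int: "int_H Pih \<noteq> {}" and h: "strictly_convex_on Pih h"
    and "\<exists>gh Hh. (\<forall>x\<in>int_H Pih.
          (h has_derivative (\<lambda>d. gh x \<bullet> d)) (at x within Pih) \<and>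
          (gh has_derivative Hh x) (at x within Pih)) \<and>
        (\<forall>b\<in>bdry_H Pih. filterlim (\<lambda>x. norm (Phi (gh x))) at_top (at b within int_H Pih))"
    unfolding admissible_perturbation_def by blast+
  then obtain gh where
    gh: "\<And>x. x \<in> int_H Pih \<Longrightarrow> (h has_derivative (\<lambda>d. gh x \<bullet> d)) (at x within Pih)"
    and blow: "\<And>b. b \<in> bdry_H Pih \<Longrightarrow> filterlim (\<lambda>x. norm (Phi (gh x))) at_top (at b within int_H Pih)"
    by blast
  from int obtain x0 where x0: "x0 \<in> int_H Pih" by blast
  have strict: "strictly_convex_on Pih obj"
    unfolding obj_def by (rule strictly_convex_on_add_inner[OF h])
  have "barrier_minimization Pih obj (\<lambda>x. c + gh x) x0"
  proof
    show "Pih \<subseteq> simplexP" using subset_simplexP_if_admissible_perturbation[OF assms] .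
    show "convex_on Pih obj" using strict by (rule strictly_convex_on_imp_convex_on)
    fix x assume "x \<in> int_H Pih"
    then have "(obj has_derivative (\<lambda>d. c \<bullet> d + gh x \<bullet> d)) (at x within Pih)"
      unfolding obj_def by (intro has_derivative_add has_derivative_inner_right gh has_derivative_ident)
    then show "(obj has_derivative (\<lambda>d. (c + gh x) \<bullet> d)) (at x within Pih)"
      by (simp add: inner_add_left)
  next
    fix b assume "b \<in> bdry_H Pih"
    then show "filterlim (\<lambda>x. norm (Phi (c + gh x))) at_top (at b within int_H Pih)"
      by (rule filterlim_norm_Phi_add_const[OF blow])
  qed (fact closed convex x0)+
  then have "\<exists>!\<omega>. \<omega> \<in> Pih \<and> (\<forall>\<omega>'\<in>Pih. obj \<omega> \<le> obj \<omega>')"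
    using barrier_minimization.minimizer_exists strictly_convex_on_minimizer_unique[OF strict] by blast
  then have "(THE \<omega>. \<omega> \<in> Pih \<and> (\<forall>\<omega>'\<in>Pih. obj \<omega> \<le> obj \<omega>')) \<in> Pih"
    by (rule theI'[THEN conjunct1])
  then show ?thesis
    by (simp add: best_response_def obj_def c_def inner_vec_def mult.commute)
qed

lemma flow_densityD:
  assumes "flow_density mu dmu"
  shows "\<And>r. 0 \<le> r \<Longrightarrow> (mu e has_real_derivative dmu e r) (at r within {0..})"
    and "continuous_on {0..} (dmu e)" and "strict_mono_on {0..} (mu e)"
    and "strictly_convex_on {0..} (\<lambda>r. - mu e r)" and "mu e 0 = 0"
  using assms unfolding flow_density_def by blast+

lemma continuous_on_mu:
  assumes "flow_density mu dmu"
  shows "continuous_on {0..} (mu e)"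
  unfolding continuous_on_eq_continuous_within
  using DERIV_continuous[OF flow_densityD(1)[OF assms]] by simp

lemma dmu_pos:
  assumes fd: "flow_density mu dmu" and r: "0 \<le> r"
  shows "0 < dmu e r"
proof -
  have "convex_on {0..} (\<lambda>r. - mu e r)"
    using strictly_convex_on_imp_convex_on[OF flow_densityD(4)[OF fd]] .
  moreover have "((\<lambda>r. - mu e r) has_derivative (\<lambda>x. - (dmu e r * x))) (at r within {0..})"
    using has_derivative_minus[OF flow_densityD(1)[OF fd r, unfolded has_field_derivative_def]] by simp
  ultimately have "- mu e r - dmu e r \<le> - mu e (r + 1)"
    using convex_on_tangent_le[of "{0..}" _ r "r + 1"] r by fastforce
  moreover have "mu e r < mu e (r + 1)"
    using strict_mono_onD[OF flow_densityD(3)[OF fd], of r "r + 1"] r by simp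
  ultimately show ?thesis by simp
qed

lemma capacity_eq_SUP:
  assumes "flow_density mu dmu"
  shows "capacity mu e = (SUP r\<in>{0..}. ereal (mu e r))"
proof -
  have mono: "mu e r0 \<le> mu e r" if "0 \<le> r0" "r0 \<le> r" for r0 r
    using strict_mono_on_leD[OF flow_densityD(3)[OF assms], of r0 r] that by simp
  have "((\<lambda>r. ereal (mu e r)) \<longlongrightarrow> (SUP r\<in>{0..}. ereal (mu e r))) at_top"
  proof (rule increasing_tendsto)
    show "\<forall>\<^sub>F r in at_top. ereal (mu e r) \<le> (SUP r\<in>{0..}. ereal (mu e r))"
      using eventually_ge_at_top[of 0] by eventually_elim (auto intro: SUP_upper)
    fix x assume "x < (SUP r\<in>{0..}. ereal (mu e r))"
    then obtain r0 where r0: "0 \<le> r0" "x < ereal (mu e r0)" unfolding less_SUP_iff by auto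
    show "\<forall>\<^sub>F r in at_top. x < ereal (mu e r)"
      using eventually_ge_at_top[of r0]
      by eventually_elim (use r0 mono in \<open>auto intro: order_less_le_trans\<close>)
  qed
  then show ?thesis unfolding capacity_def
    by (rule tendsto_Lim[OF trivial_limit_at_top_linorder])
qed

lemma less_capacity_imp_less_mu:
  assumes "flow_density mu dmu" and "ereal y < capacity mu e"
  shows "\<exists>R\<ge>0. y < mu e R"
  using assms(2) unfolding capacity_eq_SUP[OF assms(1)] less_SUP_iff by auto

lemma mu_inv_le:
  assumes fd: "flow_density mu dmu" and y: "0 \<le> y" "y \<le> mu e R" and R: "0 \<le> R"
  shows "0 \<le> mu_inv mu e y" and "mu_inv mu e y \<le> R"
proof -
  have "continuous_on {0..R} (mu e)"
    using continuous_on_mu[OF fd] by (rule continuous_on_subset) auto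
  then obtain x where x: "0 \<le> x" "x \<le> R" "mu e x = y"
    using IVT'[of "mu e" 0 y R] y R flow_densityD(5)[OF fd] by auto
  have "mu_inv mu e y = x" unfolding mu_inv_def
  proof (rule the_equality)
    fix r assume "0 \<le> r \<and> mu e r = y"
    then show "r = x"
      using x strict_mono_onD[OF flow_densityD(3)[OF fd, of e], of r x]
        strict_mono_onD[OF flow_densityD(3)[OF fd, of e], of x r]
      by (cases r x rule: linorder_cases) auto
  qed (use x in simp)
  then show "0 \<le> mu_inv mu e y" "mu_inv mu e y \<le> R" using x by simp_all
qed

lemma dmu_bounded_below:
  assumes "flow_density mu dmu" and "0 \<le> R"
  shows "\<exists>c>0. \<forall>r\<in>{0..R}. c \<le> dmu e r"
proof -
  have "continuous_on {0..R} (dmu e)"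
    using flow_densityD(2)[OF assms(1)] by (rule continuous_on_subset) auto
  then obtain x where "x \<in> {0..R}" "\<forall>r\<in>{0..R}. dmu e x \<le> dmu e r"
    using continuous_attains_inf[of "{0..R}" "dmu e"] assms(2) by auto
  then show ?thesis using dmu_pos[OF assms(1)] by auto
qed

lemma relaxation_le:
  fixes \<phi> b :: "real \<Rightarrow> real"
  assumes deriv: "\<And>s. 0 \<le> s \<Longrightarrow> (\<phi> has_real_derivative \<eta> * (b s - \<phi> s)) (at s within {0..})"
    and b: "\<And>s. 0 \<le> s \<Longrightarrow> b s \<le> m" and "0 \<le> \<eta>" and "0 \<le> t"
  shows "\<phi> t \<le> m + exp (- (\<eta> * t)) * (\<phi> 0 - m)"
proof -
  define \<psi> where "\<psi> s = exp (\<eta> * s) * (\<phi> s - m)" for s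
  have d\<psi>: "(\<psi> has_real_derivative exp (\<eta> * s) * \<eta> * (b s - m)) (at s within {0..})"
    if "0 \<le> s" for s
  proof -
    have "((\<lambda>s. exp (\<eta> * s)) has_real_derivative exp (\<eta> * s) * \<eta>) (at s within {0..})"
      by (auto intro!: derivative_eq_intros)
    moreover have "((\<lambda>s. \<phi> s - m) has_real_derivative \<eta> * (b s - \<phi> s) - 0) (at s within {0..})"
      by (intro DERIV_diff deriv that DERIV_const)
    ultimately show ?thesis unfolding \<psi>_def
      by (rule DERIV_cong[OF DERIV_mult]) (simp add: algebra_simps)
  qed
  have "\<psi> t \<le> \<psi> 0"
  proof (rule DERIV_nonpos_imp_decreasing_open[OF \<open>0 \<le> t\<close>])
    fix s assume s: "0 < s" "s < t"
    have "at s within {0..} = at s" by (rule at_within_interior) (use s in simp)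
    then have "DERIV \<psi> s :> exp (\<eta> * s) * \<eta> * (b s - m)" using d\<psi>[of s] s by simp
    moreover have "exp (\<eta> * s) * \<eta> * (b s - m) \<le> 0"
      using b[of s] s \<open>0 \<le> \<eta>\<close> by (simp add: mult_nonneg_nonpos)
    ultimately show "\<exists>y. DERIV \<psi> s :> y \<and> y \<le> 0" by blast
  next
    have "continuous_on {0..} \<psi>"
      unfolding continuous_on_eq_continuous_within using DERIV_continuous[OF d\<psi>] by simp
    then show "continuous_on {0..t} \<psi>" by (rule continuous_on_subset) auto
  qed
  then have "exp (- (\<eta> * t)) * (exp (\<eta> * t) * (\<phi> t - m)) \<le> exp (- (\<eta> * t)) * (\<phi> 0 - m)"
    by (intro mult_left_mono) (simp_all add: \<psi>_def)
  moreover have "exp (- (\<eta> * t)) * exp (\<eta> * t) = 1" by (simp flip: exp_add)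
  ultimately show ?thesis by (simp add: mult.assoc[symmetric])
qed

lemma nonneg_if_ln2_le_mult:
  fixes \<eta> t :: real
  assumes "0 < \<eta>" and "ln 2 \<le> \<eta> * t"
  shows "0 \<le> t"
proof -
  have "0 \<le> \<eta> * t" using assms(2) by (rule order_trans[rotated]) simp
  then show ?thesis using assms(1) by (simp add: zero_le_mult_iff)
qed

lemma relaxation_le_after_ln2:
  fixes \<phi> b :: "real \<Rightarrow> real"
  assumes deriv: "\<And>s. 0 \<le> s \<Longrightarrow> (\<phi> has_real_derivative \<eta> * (b s - \<phi> s)) (at s within {0..})"
    and b: "\<And>s. 0 \<le> s \<Longrightarrow> b s \<le> m" and "0 < \<eta>" and t: "ln 2 \<le> \<eta> * t"
  shows "\<phi> t \<le> max m ((\<phi> 0 + m) / 2)"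
proof -
  have "0 \<le> t" using nonneg_if_ln2_le_mult \<open>0 < \<eta>\<close> t .
  have "exp (- (\<eta> * t)) \<le> exp (- ln 2)" using t by simp
  then have half: "exp (- (\<eta> * t)) \<le> 1 / 2" by (simp add: exp_minus)
  have "exp (- (\<eta> * t)) * (\<phi> 0 - m) \<le> max 0 ((\<phi> 0 - m) / 2)"
  proof (cases "\<phi> 0 \<le> m")
    case True
    then show ?thesis by (simp add: mult_nonneg_nonpos)
  next
    case False
    then have "exp (- (\<eta> * t)) * (\<phi> 0 - m) \<le> 1 / 2 * (\<phi> 0 - m)"
      using half by (intro mult_right_mono) auto
    then show ?thesis by (simp add: le_max_iff_disj)
  qed
  moreover have "\<phi> t \<le> m + exp (- (\<eta> * t)) * (\<phi> 0 - m)"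
    using relaxation_le[OF deriv b _ \<open>0 \<le> t\<close>] \<open>0 < \<eta>\<close> by simp
  ultimately show ?thesis unfolding max_def by (auto split: if_splits)
qed

lemma fpi_component_eq_inner: "fpi pth x $ e = (\<chi> p. Amat pth e p) \<bullet> x"
  by (simp add: fpi_def inner_vec_def)

lemma fpi_component_bounds:
  assumes "x \<in> simplexP"
  shows "0 \<le> fpi pth x $ e" and "fpi pth x $ e \<le> 1"
proof -
  have nonneg: "\<And>p. 0 \<le> x $ p" and sum: "(\<Sum>p\<in>UNIV. x $ p) = 1"
    using assms by (auto simp: simplexP_def)
  show "0 \<le> fpi pth x $ e" using nonneg by (simp add: fpi_def Amat_def sum_nonneg)
  have "(\<Sum>p\<in>UNIV. Amat pth e p * x $ p) \<le> (\<Sum>p\<in>UNIV. x $ p)"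
    using nonneg by (intro sum_mono) (simp add: Amat_def)
  then show "fpi pth x $ e \<le> 1" using sum by (simp add: fpi_def)
qed

lemma flow_ceiling:
  fixes mu :: "'e::finite \<Rightarrow> real \<Rightarrow> real" and pth :: "'p::finite \<Rightarrow> 'e list"
  assumes ap: "admissible_perturbation mu pth Pih h"
  obtains m B where "\<forall>\<omega>\<in>Pih. fpi pth \<omega> $ e \<le> m"
    and "\<forall>x\<in>PiSet mu pth. max m ((fpi pth x $ e + m) / 2) \<le> B"
    and "ereal B < capacity mu e"
proof -
  from ap have sub: "Pih \<subseteq> PiSet mu pth" and "int_H Pih \<noteq> {}"
    unfolding admissible_perturbation_def by blast+
  then have "Pih \<noteq> {}" using int_H_subset by blast
  moreover have "continuous_on Pih (\<lambda>x. (\<chi> p. Amat pth e p) \<bullet> x)"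
    by (intro continuous_intros)
  ultimately obtain \<omega> where \<omega>: "\<omega> \<in> Pih" "\<forall>\<omega>'\<in>Pih. fpi pth \<omega>' $ e \<le> fpi pth \<omega> $ e"
    using continuous_attains_sup[OF compact_if_admissible_perturbation[OF ap]]
    unfolding fpi_component_eq_inner by blast
  define m where "m = fpi pth \<omega> $ e"
  have m_cap: "ereal m < capacity mu e" using \<omega>(1) sub by (auto simp: m_def PiSet_def)
  show thesis
  proof (cases "capacity mu e")
    case (real C)
    have "\<forall>x\<in>PiSet mu pth. fpi pth x $ e \<le> C"
    proof
      fix x assume "x \<in> PiSet mu pth"
      then have "ereal (fpi pth x $ e) < capacity mu e" by (simp add: PiSet_def)
      then show "fpi pth x $ e \<le> C" using real by simp
    qed
    moreover have "m < C" using m_cap real by simp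
    ultimately have "\<forall>x\<in>PiSet mu pth. max m ((fpi pth x $ e + m) / 2) \<le> (m + C) / 2"
      by (intro ballI max.boundedI) auto
    then show thesis using that[of m "(m + C) / 2"] \<omega>(2) \<open>m < C\<close> real by (auto simp: m_def)
  next
    case PInf
    have "\<forall>x\<in>PiSet mu pth. fpi pth x $ e \<le> 1"
      using fpi_component_bounds PiSet_subset_simplexP by blast
    moreover have "m \<le> 1" using \<omega>(1) sub \<open>\<forall>x\<in>PiSet mu pth. fpi pth x $ e \<le> 1\<close> by (auto simp: m_def)
    ultimately have "\<forall>x\<in>PiSet mu pth. max m ((fpi pth x $ e + m) / 2) \<le> 1"
      by (intro ballI max.boundedI) auto
    then show thesis using that[of m 1] \<omega>(2) PInf by (auto simp: m_def)
  next
    case MInf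
    with m_cap show thesis by simp
  qed
qed

lemma fpi_component_has_real_derivative:
  assumes "(\<pi> has_vector_derivative D) (at t within S)"
  shows "((\<lambda>t. fpi pth (\<pi> t) $ e) has_real_derivative fpi pth D $ e) (at t within S)"
proof -
  define c where "c = (\<chi> p. Amat pth e p)"
  have "((\<lambda>t. c \<bullet> \<pi> t) has_derivative (\<lambda>x. c \<bullet> (x *\<^sub>R D))) (at t within S)"
    using has_derivative_inner_right[OF assms[unfolded has_vector_derivative_def]] .
  moreover have "(\<lambda>x. c \<bullet> (x *\<^sub>R D)) = (*) (c \<bullet> D)" by (auto simp: fun_eq_iff)
  ultimately show ?thesis unfolding has_field_derivative_def fpi_component_eq_inner c_def by simp
qed

lemma flow_bound_after_transient:
  fixes mu :: "'e::finite \<Rightarrow> real \<Rightarrow> real" and pth :: "'p::finite \<Rightarrow> 'e list"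
  assumes ap: "admissible_perturbation mu pth Pih h"
    and sol: "is_solution mu dmu pth src dst G Pih h \<eta> \<pi> \<rho>"
    and "0 < \<eta>" "ln 2 \<le> \<eta> * t"
    and m: "\<forall>\<omega>\<in>Pih. fpi pth \<omega> $ e \<le> m"
  shows "fpi pth (\<pi> t) $ e \<le> max m ((fpi pth (\<pi> 0) $ e + m) / 2)"
proof (rule relaxation_le_after_ln2)
  define BR where "BR s = best_response mu dmu pth Pih h (mu_vec mu (\<rho> s))" for s
  fix s :: real assume "0 \<le> s"
  then have "(\<pi> has_vector_derivative \<eta> *\<^sub>R (BR s - \<pi> s)) (at s within {0..})"
    using sol unfolding is_solution_def BR_def by blast
  then show "((\<lambda>s. fpi pth (\<pi> s) $ e) has_real_derivative \<eta> * (fpi pth (BR s) $ e - fpi pth (\<pi> s) $ e))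
      (at s within {0..})"
    using fpi_component_has_real_derivative
    by (fastforce simp: fpi_component_eq_inner inner_diff_right)
  show "fpi pth (BR s) $ e \<le> m" using m best_response_mem[OF ap] by (simp add: BR_def)
qed fact+

lemma dmu_rho_pi_bounded_below:
  fixes mu :: "'e::finite \<Rightarrow> real \<Rightarrow> real" and pth :: "'p::finite \<Rightarrow> 'e list"
  assumes fd: "flow_density mu dmu" and ap: "admissible_perturbation mu pth Pih h"
  obtains c where "\<And>e. 0 < c e"
    and "\<And>\<eta> \<pi> \<rho> t e. 0 < \<eta> \<Longrightarrow> is_solution mu dmu pth src dst G Pih h \<eta> \<pi> \<rho> \<Longrightarrow>
           ln 2 \<le> \<eta> * t \<Longrightarrow> c e \<le> dmu e (rho_pi mu pth (\<pi> t) e)"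
proof -
  have "\<exists>c. 0 < c \<and> (\<forall>\<eta> \<pi> \<rho> t. 0 < \<eta> \<longrightarrow> is_solution mu dmu pth src dst G Pih h \<eta> \<pi> \<rho> \<longrightarrow>
           ln 2 \<le> \<eta> * t \<longrightarrow> c \<le> dmu e (rho_pi mu pth (\<pi> t) e))" for e
  proof -
    obtain m B where m: "\<forall>\<omega>\<in>Pih. fpi pth \<omega> $ e \<le> m"
      and B: "\<forall>x\<in>PiSet mu pth. max m ((fpi pth x $ e + m) / 2) \<le> B"
      and "ereal B < capacity mu e"
      using flow_ceiling[OF ap] by blast
    then obtain R where R: "0 \<le> R" "B < mu e R"
      using less_capacity_imp_less_mu[OF fd] by blast
    obtain c where c: "0 < c" "\<forall>r\<in>{0..R}. c \<le> dmu e r"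
      using dmu_bounded_below[OF fd R(1)] by blast
    have "c \<le> dmu e (rho_pi mu pth (\<pi> t) e)"
      if \<eta>: "0 < \<eta>" and sol: "is_solution mu dmu pth src dst G Pih h \<eta> \<pi> \<rho>"
        and t: "ln 2 \<le> \<eta> * t" for \<eta> \<pi> \<rho> t
    proof -
      have "0 \<le> t" using nonneg_if_ln2_le_mult \<eta> t .
      then have "\<pi> t \<in> PiSet mu pth" "\<pi> 0 \<in> PiSet mu pth"
        using sol unfolding is_solution_def by auto
      have nonneg: "0 \<le> fpi pth (\<pi> t) $ e"
        using fpi_component_bounds(1) PiSet_subset_simplexP \<open>\<pi> t \<in> PiSet mu pth\<close> by blast
      have "fpi pth (\<pi> t) $ e \<le> max m ((fpi pth (\<pi> 0) $ e + m) / 2)"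
        using flow_bound_after_transient[OF ap sol \<eta> t m] .
      also have "\<dots> \<le> B" using B \<open>\<pi> 0 \<in> PiSet mu pth\<close> by blast
      also have "\<dots> \<le> mu e R" using R(2) by simp
      finally have "rho_pi mu pth (\<pi> t) e \<in> {0..R}"
        using mu_inv_le[OF fd nonneg _ R(1)] by (simp add: rho_pi_def)
      then show ?thesis using c(2) by blast
    qed
    then show ?thesis using c(1) by blast
  qed
  then obtain c where "\<forall>e. 0 < c e \<and> (\<forall>\<eta> \<pi> \<rho> t. 0 < \<eta> \<longrightarrow>
      is_solution mu dmu pth src dst G Pih h \<eta> \<pi> \<rho> \<longrightarrow> ln 2 \<le> \<eta> * t \<longrightarrow> c e \<le> dmu e (rho_pi mu pth (\<pi> t) e))"
    using choice[of "\<lambda>e c. 0 < c \<and> (\<forall>\<eta> \<pi> \<rho> t. 0 < \<eta> \<longrightarrow>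
      is_solution mu dmu pth src dst G Pih h \<eta> \<pi> \<rho> \<longrightarrow> ln 2 \<le> \<eta> * t \<longrightarrow> c \<le> dmu e (rho_pi mu pth (\<pi> t) e))"]
    by blast
  then show thesis using that by blast
qed

lemma abs_gradW_le:
  assumes "0 \<le> \<alpha>" "\<alpha> \<le> 1"
    and c: "\<And>e. 0 < c e" "\<And>e. c e \<le> dmu e (rho_pi mu pth \<pi> e)"
  shows "\<bar>gradW mu dmu pth src n \<alpha> \<rho> \<pi> $ p\<bar> \<le> real n * (\<Sum>e\<in>UNIV. 1 / c e)"
proof -
  define T where
    "T e = sgn (\<rho> $ e - rho_pi mu pth \<pi> e) * Amat pth e p / dmu e (rho_pi mu pth \<pi> e)" for e
  have T: "\<bar>T e\<bar> \<le> 1 / c e" for e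
  proof -
    have "\<bar>sgn (\<rho> $ e - rho_pi mu pth \<pi> e) * Amat pth e p\<bar> \<le> 1"
      by (simp add: Amat_def abs_sgn_eq)
    then show ?thesis
      unfolding T_def abs_divide using c[of e] by (intro frac_le) auto
  qed
  have "\<bar>\<alpha> ^ v * (\<Sum>e\<in>{e. src e = v}. T e)\<bar> \<le> (\<Sum>e\<in>UNIV. 1 / c e)" for v
  proof -
    have "\<bar>\<alpha> ^ v * (\<Sum>e\<in>{e. src e = v}. T e)\<bar> \<le> \<bar>\<Sum>e\<in>{e. src e = v}. T e\<bar>"
      using assms(1,2) by (simp add: abs_mult power_le_one mult_left_le_one_le)
    also have "\<dots> \<le> (\<Sum>e\<in>{e. src e = v}. 1 / c e)"
      using T by (rule order_trans[OF sum_abs sum_mono])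
    also have "\<dots> \<le> (\<Sum>e\<in>UNIV. 1 / c e)"
      using c(1) by (intro sum_mono2) (auto intro: less_imp_le)
    finally show ?thesis .
  qed
  then have "\<bar>\<Sum>v<n. \<alpha> ^ v * (\<Sum>e\<in>{e. src e = v}. T e)\<bar> \<le> (\<Sum>v<n. \<Sum>e\<in>UNIV. 1 / c e)"
    by (rule order_trans[OF sum_abs sum_mono])
  then show ?thesis by (simp add: gradW_def T_def)
qed

lemma abs_inner_le_if_simplexP:
  assumes x: "\<And>p. \<bar>x $ p\<bar> \<le> L" and \<omega>: "\<omega> \<in> simplexP"
  shows "\<bar>x \<bullet> (\<omega>::real^'p::finite)\<bar> \<le> L"
proof -
  have nonneg: "\<And>p. 0 \<le> \<omega> $ p" and sum: "(\<Sum>p\<in>UNIV. \<omega> $ p) = 1"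
    using \<omega> by (auto simp: simplexP_def)
  have "\<bar>x \<bullet> \<omega>\<bar> \<le> (\<Sum>p\<in>UNIV. \<bar>x $ p * \<omega> $ p\<bar>)"
    unfolding inner_vec_def inner_real_def by (rule sum_abs)
  also have "\<dots> = (\<Sum>p\<in>UNIV. \<bar>x $ p\<bar> * \<omega> $ p)"
    using nonneg by (simp add: abs_mult)
  also have "\<dots> \<le> (\<Sum>p\<in>UNIV. L * \<omega> $ p)"
    using x nonneg by (intro sum_mono mult_right_mono) auto
  also have "\<dots> = L" using sum by (simp add: sum_distrib_left[symmetric])
  finally show ?thesis .
qed

lemma inner_Phi_diff_simplexP_le:
  fixes x \<omega> \<pi> :: "real^'p::finite"
  assumes "\<And>p. \<bar>x $ p\<bar> \<le> L" and "\<omega> \<in> simplexP" and "\<pi> \<in> simplexP"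
  shows "Phi x \<bullet> (\<omega> - \<pi>) \<le> 2 * L"
proof -
  have "(\<Sum>p\<in>UNIV. (\<omega> - \<pi>) $ p) = 0"
    using assms(2,3) by (simp add: simplexP_def sum_subtractf)
  then have "Phi x \<bullet> (\<omega> - \<pi>) = x \<bullet> \<omega> - x \<bullet> \<pi>"
    by (subst inner_Phi_eq_of_sum_zero) (simp_all add: inner_diff_right)
  then show ?thesis
    using abs_inner_le_if_simplexP[OF assms(1,2)] abs_inner_le_if_simplexP[OF assms(1,3)] by linarith
qed

lemma inner_Phi_gradW_le:
  fixes mu :: "'e::finite \<Rightarrow> real \<Rightarrow> real" and pth :: "'p::finite \<Rightarrow> 'e list"
  assumes ap: "admissible_perturbation mu pth Pih h"
    and sol: "is_solution mu dmu pth src dst G Pih h \<eta> \<pi> \<rho>" and "0 \<le> t"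
    and "0 \<le> \<alpha>" "\<alpha> \<le> 1"
    and c: "\<And>e. 0 < c e" "\<And>e. c e \<le> dmu e (rho_pi mu pth (\<pi> t) e)"
  shows "Phi (gradW mu dmu pth src n \<alpha> (\<rho> t) (\<pi> t)) \<bullet>
           (best_response mu dmu pth Pih h (mu_vec mu (\<rho> t)) - \<pi> t)
         \<le> 2 * (real n * (\<Sum>e\<in>UNIV. 1 / c e))"
proof (rule inner_Phi_diff_simplexP_le)
  show "\<bar>gradW mu dmu pth src n \<alpha> (\<rho> t) (\<pi> t) $ p\<bar> \<le> real n * (\<Sum>e\<in>UNIV. 1 / c e)" for p
    using assms(4,5) c by (rule abs_gradW_le)
  show "best_response mu dmu pth Pih h (mu_vec mu (\<rho> t)) \<in> simplexP"
    using best_response_mem[OF ap] subset_simplexP_if_admissible_perturbation[OF ap] by blast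
  show "\<pi> t \<in> simplexP"
    using sol \<open>0 \<le> t\<close> PiSet_subset_simplexP unfolding is_solution_def by blast
qed

theorem lemma6:
  fixes src dst :: "'e::finite \<Rightarrow> nat" and n :: nat
    and pth :: "'p::finite \<Rightarrow> 'e list"
    and mu dmu :: "'e \<Rightarrow> real \<Rightarrow> real"
    and G :: "nat \<Rightarrow> real^'e \<Rightarrow> real^'p \<Rightarrow> real^'e"
    and Pih :: "(real^'p) set" and h :: "real^'p \<Rightarrow> real"
    and \<alpha> :: real
  assumes "network src dst n"
    and "path_indexing src dst n pth"
    and "flow_density mu dmu"
    and "min_cut_gt_one mu src dst n"
    and "local_decisions mu pth src n G"
    and "admissible_perturbation mu pth Pih h"
    and "0 < \<alpha>" and "\<alpha> < 1"
  shows "\<exists>l>0. \<forall>\<eta>>0. \<exists>t0\<ge>0. \<forall>\<pi> \<rho>.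
           admissible_init mu pth (\<pi> 0) (\<rho> 0) \<longrightarrow>
           is_solution mu dmu pth src dst G Pih h \<eta> \<pi> \<rho> \<longrightarrow>
           (\<forall>t\<ge>t0. Phi (gradW mu dmu pth src n \<alpha> (\<rho> t) (\<pi> t)) \<bullet>
                      (best_response mu dmu pth Pih h (mu_vec mu (\<rho> t)) - \<pi> t)
                    \<le> 2 * l / (1 - \<alpha>))"
proof -
  obtain c where c_pos: "\<And>e. 0 < c e"
    and c_le: "\<And>\<eta> \<pi> \<rho> t e. 0 < \<eta> \<Longrightarrow> is_solution mu dmu pth src dst G Pih h \<eta> \<pi> \<rho> \<Longrightarrow>
                 ln 2 \<le> \<eta> * t \<Longrightarrow> c e \<le> dmu e (rho_pi mu pth (\<pi> t) e)"
    using dmu_rho_pi_bounded_below[OF assms(3,6)] by blast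
  define L where "L = real n * (\<Sum>e\<in>UNIV. 1 / c e)"
  have "0 \<le> L" using c_pos by (simp add: L_def sum_nonneg less_imp_le)
  have "2 * L \<le> 2 * (L + 1) * (1 - \<alpha>) / (1 - \<alpha>)" using assms(8) by simp
  also have "\<dots> \<le> 2 * (L + 1) / (1 - \<alpha>)"
    using \<open>0 \<le> L\<close> assms(7,8) by (intro divide_right_mono mult_left_le_one_le) auto
  finally have L_le: "2 * L \<le> 2 * (L + 1) / (1 - \<alpha>)" .
  have bound: "Phi (gradW mu dmu pth src n \<alpha> (\<rho> t) (\<pi> t)) \<bullet>
          (best_response mu dmu pth Pih h (mu_vec mu (\<rho> t)) - \<pi> t) \<le> 2 * (L + 1) / (1 - \<alpha>)"
    if \<eta>: "0 < \<eta>" and sol: "is_solution mu dmu pth src dst G Pih h \<eta> \<pi> \<rho>" and "ln 2 / \<eta> \<le> t"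
    for \<eta> \<pi> \<rho> t
  proof -
    have t: "ln 2 \<le> \<eta> * t" using that by (simp add: divide_le_eq mult.commute)
    have "Phi (gradW mu dmu pth src n \<alpha> (\<rho> t) (\<pi> t)) \<bullet>
          (best_response mu dmu pth Pih h (mu_vec mu (\<rho> t)) - \<pi> t) \<le> 2 * L"
      unfolding L_def
      by (rule inner_Phi_gradW_le[OF assms(6) sol nonneg_if_ln2_le_mult[OF \<eta> t]])
        (use assms(7,8) c_pos c_le[OF \<eta> sol t] in auto)
    with L_le show ?thesis by linarith
  qed
  show ?thesis
    by (rule exI[of _ "L + 1"], intro conjI allI impI exI[of _ "ln 2 / \<eta>" for \<eta>])
      (use bound \<open>0 \<le> L\<close> in auto)
qed

end
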